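(* Let $n\ge1$, let $f_1,\dots,f_n:\mathbb{R}^d\to\mathbb{R}$ be $L$-smooth (i.e. $\|\nabla f_i(x)-\nabla f_i(y)\|\le L\|x-y\|$ for all $x,y$), and $f=\frac1n\sum_i f_i$. Let $x_0,\dots,x_T$ and $\nabla_0,\dots,\nabla_{T-1}$ be the iterates and gradient estimators produced by AdaSpider (described in the context) with input $x_0$, $\beta_0>0$, $G_0>0$. Then there is an absolute constant $C>0$ such that \[ \mathbb{E}\Big[\sum_{t=0}^{T-1}\|\nabla_t-\nabla f(x_t)\|\Big]\le C\,\frac{L\,n^{1/4}\sqrt T}{\beta_0}\sqrt{\log\!\Big(1+nT\Big(\frac{L}{\beta_0G_0}+\frac{\|\nabla f(x_0)\|}{G_0}\Big)\Big)}. \]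
   Context: $\|\cdot\|$ is the Euclidean norm. AdaSpider: input $x_0\in\mathbb{R}^d$, $\beta_0>0$, $G_0>0$, horizon $T\ge1$. For $t=0,1,\dots,T-1$: if $t \bmod n=0$, set $\nabla_t:=\nabla f(x_t)$; otherwise pick $i_t\in\{1,\dots,n\}$ uniformly at random (independently of the past) and set $\nabla_t:=\nabla f_{i_t}(x_t)-\nabla f_{i_t}(x_{t-1})+\nabla_{t-1}$. Then set $\gamma_t:=1\big/\big(n^{1/4}\beta_0\sqrt{n^{1/2}G_0^2+\sum_{s=0}^t\|\nabla_s\|^2}\big)$ and $x_{t+1}:=x_t-\gamma_t\nabla_t$. *)

theory Defs
  imports Complex_Main "HOL-Library.FuncSet"
begin

text \<open>Vectors of R^d are encoded as functions nat => real vanishing at coordinates >= d,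
  so that the dimension d can be quantified inside the statement (the constant C must be
  independent of d).\<close>

definition Rd :: "nat \<Rightarrow> (nat \<Rightarrow> real) set" where
  "Rd d = {x. \<forall>i\<ge>d. x i = 0}"

definition vnorm :: "nat \<Rightarrow> (nat \<Rightarrow> real) \<Rightarrow> real" where
  "vnorm d x = sqrt (\<Sum>i<d. (x i)^2)"

definition vinner :: "nat \<Rightarrow> (nat \<Rightarrow> real) \<Rightarrow> (nat \<Rightarrow> real) \<Rightarrow> real" where
  "vinner d x y = (\<Sum>i<d. x i * y i)"

definition is_gradient :: "nat \<Rightarrow> ((nat \<Rightarrow> real) \<Rightarrow> real) \<Rightarrow> ((nat \<Rightarrow> real) \<Rightarrow> (nat \<Rightarrow> real)) \<Rightarrow> bool" where
  "is_gradient d fn gr \<longleftrightarrow>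
     (\<forall>x\<in>Rd d. gr x \<in> Rd d \<and>
        (\<forall>\<epsilon>>0. \<exists>\<delta>>0. \<forall>h\<in>Rd d. 0 < vnorm d h \<and> vnorm d h < \<delta> \<longrightarrow>
           \<bar>fn (\<lambda>j. x j + h j) - fn x - vinner d (gr x) h\<bar> \<le> \<epsilon> * vnorm d h))"

definition lipschitz_grad :: "nat \<Rightarrow> real \<Rightarrow> ((nat \<Rightarrow> real) \<Rightarrow> (nat \<Rightarrow> real)) \<Rightarrow> bool" where
  "lipschitz_grad d L gr \<longleftrightarrow>
     (\<forall>x\<in>Rd d. \<forall>y\<in>Rd d. vnorm d (\<lambda>j. gr x j - gr y j) \<le> L * vnorm d (\<lambda>j. x j - y j))"

text \<open>Step size with accumulated squared norms S = sum_{s<=t} ||nabla_s||^2.\<close>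
definition ada_step :: "nat \<Rightarrow> real \<Rightarrow> real \<Rightarrow> real \<Rightarrow> real" where
  "ada_step n \<beta>0 G0 S = 1 / (root 4 (real n) * \<beta>0 * sqrt (sqrt (real n) * G0^2 + S))"

text \<open>Component gradients g i (i < n, 0-based), full gradient gf,
  index sequence \<omega> (\<omega> t is the index i_t drawn at step t).
  adaspider ... t = (x_t, x_{t+1}, nabla_t, sum_{s<=t} ||nabla_s||^2).\<close>
fun adaspider :: "nat \<Rightarrow> nat \<Rightarrow> ((nat \<Rightarrow> real) \<Rightarrow> (nat \<Rightarrow> real))
    \<Rightarrow> (nat \<Rightarrow> (nat \<Rightarrow> real) \<Rightarrow> (nat \<Rightarrow> real)) \<Rightarrow> real \<Rightarrow> real \<Rightarrow> (nat \<Rightarrow> real)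
    \<Rightarrow> (nat \<Rightarrow> nat) \<Rightarrow> nat
    \<Rightarrow> (nat \<Rightarrow> real) \<times> (nat \<Rightarrow> real) \<times> (nat \<Rightarrow> real) \<times> real" where
  "adaspider n d gf g \<beta>0 G0 x0 \<omega> 0 =
     (let D = gf x0; S = (vnorm d D)^2; \<gamma> = ada_step n \<beta>0 G0 S
      in (x0, (\<lambda>j. x0 j - \<gamma> * D j), D, S))"
| "adaspider n d gf g \<beta>0 G0 x0 \<omega> (Suc t) =
     (case adaspider n d gf g \<beta>0 G0 x0 \<omega> t of (xp, x, D, S) \<Rightarrow>
       (let D' = (if Suc t mod n = 0 then gf x
                  else (\<lambda>j. g (\<omega> (Suc t)) x j - g (\<omega> (Suc t)) xp j + D j));
            S' = S + (vnorm d D')^2;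
            \<gamma> = ada_step n \<beta>0 G0 S'
        in (x, (\<lambda>j. x j - \<gamma> * D' j), D', S')))"

definition ada_x where
  "ada_x n d gf g \<beta>0 G0 x0 \<omega> t = fst (adaspider n d gf g \<beta>0 G0 x0 \<omega> t)"

definition ada_grad where
  "ada_grad n d gf g \<beta>0 G0 x0 \<omega> t = fst (snd (snd (adaspider n d gf g \<beta>0 G0 x0 \<omega> t)))"

text \<open>Expectation over independent uniform indices i_1,...,i_{T-1} in {0..<n}
  (uniform average over all index sequences; unused coordinates do not matter).\<close>
definition expect_idx :: "nat \<Rightarrow> nat \<Rightarrow> ((nat \<Rightarrow> nat) \<Rightarrow> real) \<Rightarrow> real" where
  "expect_idx n T X = (\<Sum>\<omega>\<in>{..<T} \<rightarrow>\<^sub>E {..<n}. X \<omega>) / real (card ({..<T} \<rightarrow>\<^sub>E {..<n}))"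

end

theory Submission
  imports Defs "HOL-Analysis.L2_Norm" "HOL-Analysis.Convex"
begin

(*
  Let e_t = nabla_t - grad f(x_t).  It vanishes at every full-gradient step, and otherwise
  e_(t+1) = e_t + xi_t, where the increment xi_t has norm at most 2 L gamma_t ||nabla_t|| and
  averages to zero over the fresh index i_(t+1), on which e_t does not depend.  Hence the
  mean-square error grows by at most 4 L^2 E (gamma_t ||nabla_t||)^2 per step and is reset every
  n steps, so summing it over t costs only a factor n.
  Pathwise, ||e_t|| and ||x_t - x_0|| are bounded by the path length sum_(s<t) gamma_s ||nabla_s||,
  so ||nabla_t|| <= ||grad f(x_0)|| + 3 L (path length).  Inserted into the AdaGrad bound
  sum_s gamma_s^2 ||nabla_s||^2 <= ln (1 + R) / (sqrt n beta_0^2), R = S_T / (sqrt n G_0^2),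
  this gives R <= 2 Z^2 + 18 Z^2 ln (1 + R) with Z = T (L / (beta_0 G_0) + ||grad f(x_0)|| / G_0),
  whence ln (1 + R) <= 144 ln (1 + Z).  Cauchy-Schwarz over index sequences and steps then
  yields the theorem with C = 24.
*)

lemma vnorm_eq_L2_set: "vnorm d x = L2_set x {..<d}"
  by (simp add: vnorm_def L2_set_def)

lemma vnorm_nonneg: "0 \<le> vnorm d x"
  by (simp add: vnorm_eq_L2_set)

lemma vnorm_zero: "vnorm d (\<lambda>j. 0) = 0"
  by (simp add: vnorm_def)

lemma vnorm_add_le: "vnorm d (\<lambda>j. x j + y j) \<le> vnorm d x + vnorm d y"
  unfolding vnorm_eq_L2_set by (rule L2_set_triangle_ineq)

lemma vnorm_mult: "vnorm d (\<lambda>j. c * x j) = \<bar>c\<bar> * vnorm d x"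
proof -
  have "(\<Sum>i<d. (c * x i)^2) = c^2 * (\<Sum>i<d. (x i)^2)"
    by (simp add: power_mult_distrib sum_distrib_left)
  then show ?thesis by (simp add: vnorm_def real_sqrt_mult)
qed

lemma vnorm_diff_le: "vnorm d (\<lambda>j. x j - y j) \<le> vnorm d x + vnorm d y"
  using vnorm_add_le[of d x "\<lambda>j. - y j"] vnorm_mult[of d "-1" y] by simp

lemma vnorm_diff_triangle:
  "vnorm d (\<lambda>j. x j - z j) \<le> vnorm d (\<lambda>j. x j - y j) + vnorm d (\<lambda>j. y j - z j)"
  using vnorm_add_le[of d "\<lambda>j. x j - y j" "\<lambda>j. y j - z j"] by simp

lemma vnorm_sum_le: "vnorm d (\<lambda>j. \<Sum>i\<in>A. h i j) \<le> (\<Sum>i\<in>A. vnorm d (h i))"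
proof (induction A rule: infinite_finite_induct)
  case (insert a A)
  have "vnorm d (\<lambda>j. \<Sum>i\<in>insert a A. h i j) = vnorm d (\<lambda>j. h a j + (\<Sum>i\<in>A. h i j))"
    using insert by simp
  also have "\<dots> \<le> vnorm d (h a) + vnorm d (\<lambda>j. \<Sum>i\<in>A. h i j)"
    by (rule vnorm_add_le)
  finally show ?case using insert by simp
qed (simp_all add: vnorm_zero)

lemma power2_vnorm: "(vnorm d x)^2 = vinner d x x"
  by (simp add: vnorm_def vinner_def sum_nonneg power2_eq_square)

lemma vnorm_add_power2:
  "(vnorm d (\<lambda>j. x j + y j))^2 = (vnorm d x)^2 + 2 * vinner d x y + (vnorm d y)^2"
  unfolding power2_vnorm vinner_def by (simp add: algebra_simps sum.distrib sum_distrib_left)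

lemma vinner_sum_right: "vinner d x (\<lambda>j. \<Sum>i\<in>A. h i j) = (\<Sum>i\<in>A. vinner d x (h i))"
  unfolding vinner_def by (simp add: sum_distrib_left sum.swap[of _ A])

lemma power2_sum_le_card_mult: "(\<Sum>i\<in>A. a i)^2 \<le> real (card A) * (\<Sum>i\<in>A. (a i)^2)"
  using Cauchy_Schwarz_ineq_sum[of a "\<lambda>_. 1" A] by (simp add: mult.commute)

lemma sum_divide_partial_sums_le_ln:
  fixes a :: "nat \<Rightarrow> real"
  assumes "0 < c" and "\<And>q. 0 \<le> a q"
  shows "(\<Sum>s<T. a s / (c + (\<Sum>q<Suc s. a q))) \<le> ln (c + (\<Sum>q<T. a q)) - ln c"
proof (induction T)
  case (Suc T)
  define y where "y = c + (\<Sum>q<T. a q)"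
  have "0 < y" unfolding y_def using assms by (simp add: add_pos_nonneg sum_nonneg)
  moreover have "0 \<le> a T" by (rule assms(2))
  ultimately have "a T / (y + a T) \<le> ln (y + a T) - ln y"
    using ln_le_minus_one[of "y / (y + a T)"] by (simp add: ln_div field_simps)
  then show ?case using Suc by (simp add: y_def add.assoc)
qed simp

lemma ln_one_plus_le_two_sqrt:
  assumes "0 \<le> R"
  shows "ln (1 + R) \<le> 2 * sqrt R"
proof -
  have "ln (1 + R) \<le> ln ((1 + sqrt R)^2)"
    using assms by (intro ln_mono) (auto simp: power2_eq_square algebra_simps)
  also have "\<dots> = 2 * ln (1 + sqrt R)" by (simp add: ln_realpow)
  also have "\<dots> \<le> 2 * sqrt R" using ln_add_one_self_le_self[of "sqrt R"] assms by simp
  finally show ?thesis .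
qed

lemma le_of_power2_le_linear:
  fixes s a b :: real
  assumes "0 \<le> a" "0 \<le> b" and "s^2 \<le> a^2 + b * s"
  shows "s \<le> a + b"
proof (rule ccontr)
  assume "\<not> s \<le> a + b"
  then have "s * (a + b) < s * s" and "a * a \<le> s * a"
    using assms(1,2) by (auto intro: mult_strict_left_mono mult_right_mono)
  then show False using assms(3) by (simp add: power2_eq_square algebra_simps)
qed

lemma ln_self_bounding:
  fixes R Z :: real
  assumes "0 \<le> R" "0 \<le> Z" and "R \<le> 2 * Z^2 + 18 * Z^2 * ln (1 + R)"
  shows "ln (1 + R) \<le> 144 * ln (1 + Z)"
proof -
  define s where "s = sqrt R"
  have "0 \<le> s" and "s^2 = R" using assms(1) by (auto simp: s_def)
  have "18 * Z^2 * ln (1 + R) \<le> 36 * Z^2 * s"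
    using mult_left_mono[OF ln_one_plus_le_two_sqrt[OF assms(1)], of "18 * Z^2"]
    by (simp add: s_def)
  moreover have "(2 * Z)^2 = 4 * Z^2" by (simp add: power_mult_distrib)
  ultimately have "s^2 \<le> (2 * Z)^2 + 36 * Z^2 * s"
    using assms(3) \<open>s^2 = R\<close> by (smt (verit) zero_le_power2)
  then have "1 + s \<le> 1 + real 36 * (2 * Z + Z^2)"
    using le_of_power2_le_linear[of "2 * Z" "36 * Z^2" s] assms(2) by simp
  also have "\<dots> \<le> (1 + (2 * Z + Z^2))^36"
    by (rule Bernoulli_inequality) (use assms(2) zero_le_power2[of Z] in linarith)
  also have "\<dots> = ((1 + Z)^2)^36"
    by (simp add: power2_eq_square algebra_simps)
  finally have "(1 + s)^2 \<le> (((1 + Z)^2)^36)^2"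
    using \<open>0 \<le> s\<close> by (intro power_mono) auto
  moreover have "1 + R \<le> (1 + s)^2"
    using \<open>0 \<le> s\<close> \<open>s^2 = R\<close> by (simp add: power2_eq_square algebra_simps)
  ultimately have "ln (1 + R) \<le> ln ((1 + Z)^144)"
    using assms(1) by (intro ln_mono) (auto simp flip: power_mult)
  then show ?thesis using assms(2) by (simp add: ln_realpow)
qed

section \<open>AdaGrad step sizes\<close>

lemma power2_root_4:
  assumes "0 \<le> x"
  shows "(root 4 x)^2 = sqrt x"
proof -
  have "((root 4 x)^2)^2 = x" using assms by (simp flip: power_mult)
  then show ?thesis using assms by (metis real_sqrt_unique zero_le_power2)
qed

lemma power2_ada_step:
  assumes "1 \<le> n" "0 < \<beta>0" "0 \<le> S"
  shows "(ada_step n \<beta>0 G0 S)^2 = 1 / (sqrt n * \<beta>0^2 * (sqrt n * G0^2 + S))"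
  using assms by (simp add: ada_step_def power_divide power_mult_distrib power2_root_4)

lemma sum_ada_step_power2_le_ln:
  fixes u :: "nat \<Rightarrow> real"
  assumes "1 \<le> n" "0 < \<beta>0" "0 < G0"
  shows "(\<Sum>s<T. (ada_step n \<beta>0 G0 (\<Sum>q<Suc s. (u q)^2) * u s)^2)
           \<le> ln (1 + (\<Sum>q<T. (u q)^2) / (sqrt n * G0^2)) / (sqrt n * \<beta>0^2)"
proof -
  define c where "c = sqrt n * G0^2"
  have "0 < c" using assms by (simp add: c_def)
  have "(\<Sum>s<T. (ada_step n \<beta>0 G0 (\<Sum>q<Suc s. (u q)^2) * u s)^2)
      = (\<Sum>s<T. (u s)^2 / (c + (\<Sum>q<Suc s. (u q)^2))) / (sqrt n * \<beta>0^2)"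
    using assms by (simp add: power_mult_distrib power2_ada_step sum_nonneg c_def
        sum_divide_distrib mult_ac)
  also have "\<dots> \<le> (ln (c + (\<Sum>q<T. (u q)^2)) - ln c) / (sqrt n * \<beta>0^2)"
    using sum_divide_partial_sums_le_ln[OF \<open>0 < c\<close>, of "\<lambda>q. (u q)^2" T] assms
    by (intro divide_right_mono) auto
  also have "ln (c + (\<Sum>q<T. (u q)^2)) - ln c = ln (1 + (\<Sum>q<T. (u q)^2) / c)"
  proof -
    have "1 + (\<Sum>q<T. (u q)^2) / c = (c + (\<Sum>q<T. (u q)^2)) / c"
      using \<open>0 < c\<close> by (simp add: field_simps)
    moreover have "0 < c + (\<Sum>q<T. (u q)^2)"
      using \<open>0 < c\<close> by (simp add: add_pos_nonneg sum_nonneg)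
    ultimately show ?thesis using \<open>0 < c\<close> by (simp add: ln_div)
  qed
  finally show ?thesis by (simp add: c_def)
qed

lemma sum_power2_le_of_linear_bound:
  fixes u w :: "nat \<Rightarrow> real"
  assumes "\<And>t. t < T \<Longrightarrow> 0 \<le> u t \<and> u t \<le> M + 3 * L * (\<Sum>s<t. w s)"
  shows "(\<Sum>t<T. (u t)^2) \<le> 2 * (T * M)^2 + 18 * (T * L)^2 * (\<Sum>s<T. (w s)^2)"
proof -
  define Q where "Q = (\<Sum>s<T. (w s)^2)"
  have "(u t)^2 \<le> 2 * M^2 + 18 * L^2 * (T * Q)" if "t < T" for t
  proof -
    define P where "P = (\<Sum>s<t. w s)"
    have "(u t)^2 \<le> (M + 3 * L * P)^2"
      using assms[OF that] by (intro power_mono) (auto simp: P_def)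
    also have "\<dots> \<le> 2 * M^2 + 18 * L^2 * P^2"
      using zero_le_power2[of "M - 3 * L * P"] by (simp add: power2_eq_square algebra_simps)
    also have "P^2 \<le> t * (\<Sum>s<t. (w s)^2)"
      using power2_sum_le_card_mult[of w "{..<t}"] by (simp add: P_def)
    also have "\<dots> \<le> T * Q"
      unfolding Q_def using that by (intro mult_mono sum_mono2) (auto simp: sum_nonneg)
    finally show ?thesis by (simp add: mult_left_mono)
  qed
  then have "(\<Sum>t<T. (u t)^2) \<le> T * (2 * M^2 + 18 * L^2 * (T * Q))"
    using sum_mono[of "{..<T}" "\<lambda>t. (u t)^2" "\<lambda>_. 2 * M^2 + 18 * L^2 * (T * Q)"] by simp
  also have "\<dots> \<le> 2 * (T * M)^2 + 18 * (T * L)^2 * Q"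
  proof -
    have "real T \<le> (real T)^2" by (cases T) (auto simp: power2_eq_square)
    then have "T * M^2 \<le> (real T)^2 * M^2" by (rule mult_right_mono) simp
    then show ?thesis by (simp add: power_mult_distrib power2_eq_square algebra_simps)
  qed
  finally show ?thesis by (simp add: Q_def)
qed

lemma adagrad_sum_power2_le_ln:
  fixes u :: "nat \<Rightarrow> real"
  assumes "1 \<le> n" "0 \<le> L" "0 < \<beta>0" "0 < G0" "0 \<le> M"
    and u_bound: "\<And>t. t < T \<Longrightarrow>
      0 \<le> u t \<and> u t \<le> M + 3 * L * (\<Sum>s<t. ada_step n \<beta>0 G0 (\<Sum>q<Suc s. (u q)^2) * u s)"
  shows "(\<Sum>s<T. (ada_step n \<beta>0 G0 (\<Sum>q<Suc s. (u q)^2) * u s)^2)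
           \<le> 144 * ln (1 + T * (L / (\<beta>0 * G0) + M / G0)) / (sqrt n * \<beta>0^2)"
proof -
  define w where "w s = ada_step n \<beta>0 G0 (\<Sum>q<Suc s. (u q)^2) * u s" for s
  define Q where "Q = (\<Sum>s<T. (w s)^2)"
  define R where "R = (\<Sum>q<T. (u q)^2) / (sqrt n * G0^2)"
  define Z where "Z = T * (L / (\<beta>0 * G0) + M / G0)"
  have "1 \<le> sqrt n" using assms(1) by simp
  have "0 \<le> R" "0 \<le> Z" using assms(2-5) by (auto simp: R_def Z_def sum_nonneg)
  have Q_le: "Q \<le> ln (1 + R) / (sqrt n * \<beta>0^2)"
    unfolding Q_def R_def w_def using assms(1,3,4) by (rule sum_ada_step_power2_le_ln)
  have "\<beta>0^2 * Q \<le> ln (1 + R) / sqrt n"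
    using Q_le assms(3) \<open>1 \<le> sqrt n\<close> by (simp add: field_simps)
  also have "\<dots> \<le> ln (1 + R)"
    using \<open>0 \<le> R\<close> \<open>1 \<le> sqrt n\<close> by (simp add: divide_le_eq mult_le_cancel_left1)
  finally have \<beta>Q_le: "\<beta>0^2 * Q \<le> ln (1 + R)" .
  have "R \<le> (\<Sum>q<T. (u q)^2) / G0^2"
    using \<open>1 \<le> sqrt n\<close> assms(4) unfolding R_def
    by (intro divide_left_mono) (auto simp: sum_nonneg)
  also have "\<dots> \<le> (2 * (T * M)^2 + 18 * (T * L)^2 * Q) / G0^2"
  proof (rule divide_right_mono)
    show "(\<Sum>q<T. (u q)^2) \<le> 2 * (T * M)^2 + 18 * (T * L)^2 * Q"
      unfolding Q_def by (rule sum_power2_le_of_linear_bound) (use u_bound in \<open>simp add: w_def\<close>)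
  qed simp
  also have "\<dots> = 2 * (T * (M / G0))^2 + 18 * (T * (L / (\<beta>0 * G0)))^2 * (\<beta>0^2 * Q)"
    using assms(3,4) by (simp add: field_simps)
  also have "\<dots> \<le> 2 * Z^2 + 18 * Z^2 * ln (1 + R)"
  proof -
    have "(T * (M / G0))^2 \<le> Z^2" "(T * (L / (\<beta>0 * G0)))^2 \<le> Z^2"
      unfolding Z_def using assms(2-5) by (intro power_mono; auto simp: algebra_simps)+
    then show ?thesis
      using \<beta>Q_le by (intro add_mono mult_left_mono mult_mono) (auto simp: Q_def sum_nonneg)
  qed
  finally have "ln (1 + R) \<le> 144 * ln (1 + Z)"
    using \<open>0 \<le> R\<close> \<open>0 \<le> Z\<close> by (intro ln_self_bounding) auto
  with Q_le have "Q \<le> 144 * ln (1 + Z) / (sqrt n * \<beta>0^2)"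
    using assms(3) \<open>1 \<le> sqrt n\<close> by (smt (verit) divide_right_mono zero_le_mult_iff zero_le_power2)
  then show ?thesis by (simp add: Q_def w_def Z_def)
qed

section \<open>Sums over index sequences\<close>

lemma sum_PiE_insert:
  assumes "x \<notin> S"
  shows "(\<Sum>\<omega>\<in>insert x S \<rightarrow>\<^sub>E B. F \<omega>) = (\<Sum>y\<in>B. \<Sum>h\<in>S \<rightarrow>\<^sub>E B. F (h(x := y)))"
  unfolding PiE_insert_eq
  by (subst sum.reindex)
    (use assms inj_combinator[of x S "\<lambda>_. B"] in \<open>auto simp: sum.cartesian_product split_def\<close>)

lemma sum_PiE_eval_eq_mean:
  fixes H :: "('a \<Rightarrow> 'b) \<Rightarrow> 'b \<Rightarrow> real"
  assumes "t \<in> A" and "finite B" and indep: "\<And>\<omega> i. H (\<omega>(t := i)) = H \<omega>"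
  shows "(\<Sum>\<omega>\<in>A \<rightarrow>\<^sub>E B. H \<omega> (\<omega> t)) = (\<Sum>\<omega>\<in>A \<rightarrow>\<^sub>E B. \<Sum>i\<in>B. H \<omega> i) / card B"
proof -
  define S where "S = A - {t}"
  have A: "A = insert t S" and "t \<notin> S" using assms(1) by (auto simp: S_def)
  have "(\<Sum>\<omega>\<in>A \<rightarrow>\<^sub>E B. H \<omega> (\<omega> t)) = (\<Sum>h\<in>S \<rightarrow>\<^sub>E B. \<Sum>i\<in>B. H h i)"
    unfolding A sum_PiE_insert[OF \<open>t \<notin> S\<close>] indep by (simp add: sum.swap[of _ B])
  moreover have "(\<Sum>\<omega>\<in>A \<rightarrow>\<^sub>E B. \<Sum>i\<in>B. H \<omega> i)
      = card B * (\<Sum>h\<in>S \<rightarrow>\<^sub>E B. \<Sum>i\<in>B. H h i)"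
    unfolding A sum_PiE_insert[OF \<open>t \<notin> S\<close>] indep by simp
  ultimately show ?thesis by (cases "B = {}") (simp_all add: assms(2))
qed

lemma sum_sum_window_le:
  fixes D :: "nat \<Rightarrow> real"
  assumes "\<And>s. 0 \<le> D s" and "\<And>t. t < T \<Longrightarrow> I t \<subseteq> {t - w..<t}"
  shows "(\<Sum>t<T. \<Sum>s\<in>I t. D s) \<le> w * (\<Sum>s<T. D s)"
proof -
  have "(\<Sum>t<T. \<Sum>s\<in>I t. D s) \<le> (\<Sum>t<T. \<Sum>s<T. if s \<in> {t - w..<t} then D s else 0)"
  proof (rule sum_mono)
    fix t assume "t \<in> {..<T}"
    then have "{..<T} \<inter> {t - w..<t} = {t - w..<t}" by auto
    then have "(\<Sum>s<T. if s \<in> {t - w..<t} then D s else 0) = (\<Sum>s\<in>{t - w..<t}. D s)"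
      by (metis (no_types) finite_lessThan sum.inter_restrict)
    then show "(\<Sum>s\<in>I t. D s) \<le> (\<Sum>s<T. if s \<in> {t - w..<t} then D s else 0)"
      using assms \<open>t \<in> {..<T}\<close> by (simp add: sum_mono2)
  qed
  also have "\<dots> = (\<Sum>s<T. card ({..<T} \<inter> {t. t - w \<le> s \<and> s < t}) * D s)"
    by (subst sum.swap) (simp add: sum.If_cases)
  also have "\<dots> \<le> (\<Sum>s<T. w * D s)"
  proof (intro sum_mono mult_right_mono)
    fix s
    have "{..<T} \<inter> {t. t - w \<le> s \<and> s < t} \<subseteq> {s<..s + w}" by auto
    then show "real (card ({..<T} \<inter> {t. t - w \<le> s \<and> s < t})) \<le> real w"
      using card_mono[of "{s<..s + w}"] by fastforce
  qed (use assms in auto)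
  finally show ?thesis by (simp add: sum_distrib_left)
qed

lemma adaspider_cong:
  "(\<And>s. s \<le> t \<Longrightarrow> \<omega> s = \<omega>' s) \<Longrightarrow>
    adaspider n d gf g \<beta>0 G0 x0 \<omega> t = adaspider n d gf g \<beta>0 G0 x0 \<omega>' t"
  by (induction t) (simp_all split: prod.split)

locale adaspider_run =
  fixes n d T :: nat and L \<beta>0 G0 :: real and x0 :: "nat \<Rightarrow> real"
    and g :: "nat \<Rightarrow> (nat \<Rightarrow> real) \<Rightarrow> (nat \<Rightarrow> real)"
    and gf :: "(nat \<Rightarrow> real) \<Rightarrow> (nat \<Rightarrow> real)"
  assumes n_pos: "1 \<le> n" and L_nonneg: "0 \<le> L" and \<beta>0_pos: "0 < \<beta>0" and G0_pos: "0 < G0"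
    and x0_in_Rd: "x0 \<in> Rd d"
    and g_in_Rd: "\<And>i x. i < n \<Longrightarrow> x \<in> Rd d \<Longrightarrow> g i x \<in> Rd d"
    and g_lipschitz: "\<And>i. i < n \<Longrightarrow> lipschitz_grad d L (g i)"
    and gf_eq: "gf = (\<lambda>x j. (1 / real n) * (\<Sum>i<n. g i x j))"
begin

abbreviation "state \<omega> t \<equiv> adaspider n d gf g \<beta>0 G0 x0 \<omega> t"
abbreviation "iterate \<omega> t \<equiv> ada_x n d gf g \<beta>0 G0 x0 \<omega> t"
abbreviation "estimate \<omega> t \<equiv> ada_grad n d gf g \<beta>0 G0 x0 \<omega> t"
abbreviation "step \<omega> t \<equiv> ada_step n \<beta>0 G0 (\<Sum>q<Suc t. (vnorm d (estimate \<omega> q))^2)"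
abbreviation "\<Omega> \<equiv> {..<T} \<rightarrow>\<^sub>E {..<n}"

lemma state_accum: "snd (snd (snd (state \<omega> t))) = (\<Sum>q<Suc t. (vnorm d (estimate \<omega> q))^2)"
proof (induction t)
  case (Suc t)
  then show ?case by (cases "state \<omega> t") (simp add: ada_grad_def Let_def)
qed (simp add: ada_grad_def Let_def)

lemma state_next:
  "fst (snd (state \<omega> t)) = (\<lambda>j. iterate \<omega> t j - step \<omega> t * estimate \<omega> t j)"
proof (cases t)
  case (Suc k)
  then show ?thesis
    using state_accum[of \<omega> t] by (cases "state \<omega> k") (simp add: ada_x_def ada_grad_def Let_def)
qed (simp add: ada_x_def ada_grad_def Let_def)

lemma iterate_0: "iterate \<omega> 0 = x0"
  by (simp add: ada_x_def Let_def)

lemma estimate_0: "estimate \<omega> 0 = gf x0"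
  by (simp add: ada_grad_def Let_def)

lemma iterate_Suc_state: "iterate \<omega> (Suc t) = fst (snd (state \<omega> t))"
  by (cases "state \<omega> t") (simp add: ada_x_def Let_def)

lemma iterate_Suc: "iterate \<omega> (Suc t) = (\<lambda>j. iterate \<omega> t j - step \<omega> t * estimate \<omega> t j)"
  by (simp only: iterate_Suc_state state_next)

lemma estimate_Suc:
  "estimate \<omega> (Suc t) =
    (if Suc t mod n = 0 then gf (iterate \<omega> (Suc t))
     else (\<lambda>j. g (\<omega> (Suc t)) (iterate \<omega> (Suc t)) j - g (\<omega> (Suc t)) (iterate \<omega> t) j
               + estimate \<omega> t j))"
  by (cases "state \<omega> t") (simp add: ada_x_def ada_grad_def Let_def)

lemma gf_in_Rd: "x \<in> Rd d \<Longrightarrow> gf x \<in> Rd d"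
  using g_in_Rd by (simp add: gf_eq Rd_def)

lemma gf_lipschitz: "lipschitz_grad d L gf"
  unfolding lipschitz_grad_def
proof (intro ballI)
  fix x y assume "x \<in> Rd d" "y \<in> Rd d"
  have "vnorm d (\<lambda>j. gf x j - gf y j) = vnorm d (\<lambda>j. (1 / n) * (\<Sum>i<n. g i x j - g i y j))"
    by (simp add: gf_eq sum_subtractf algebra_simps)
  also have "\<dots> \<le> (1 / n) * (\<Sum>i<n. vnorm d (\<lambda>j. g i x j - g i y j))"
    by (subst vnorm_mult)
      (use vnorm_sum_le[of d "\<lambda>i j. g i x j - g i y j" "{..<n}"] in \<open>simp add: divide_right_mono\<close>)
  also have "\<dots> \<le> (1 / n) * (\<Sum>i<n. L * vnorm d (\<lambda>j. x j - y j))"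
    using g_lipschitz \<open>x \<in> Rd d\<close> \<open>y \<in> Rd d\<close>
    by (intro mult_left_mono sum_mono) (auto simp: lipschitz_grad_def)
  also have "\<dots> = L * vnorm d (\<lambda>j. x j - y j)" using n_pos by simp
  finally show "vnorm d (\<lambda>j. gf x j - gf y j) \<le> L * vnorm d (\<lambda>j. x j - y j)" .
qed

lemma index_less: "\<omega> \<in> \<Omega> \<Longrightarrow> s < T \<Longrightarrow> \<omega> s < n"
  by (auto simp: PiE_def Pi_def)

lemma iterate_estimate_in_Rd:
  assumes "\<omega> \<in> \<Omega>" "t < T"
  shows "iterate \<omega> t \<in> Rd d \<and> estimate \<omega> t \<in> Rd d \<and> iterate \<omega> (Suc t) \<in> Rd d"
  using assms(2)
proof (induction t)
  case 0
  then show ?case using x0_in_Rd gf_in_Rd by (simp add: iterate_0 estimate_0 iterate_Suc Rd_def)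
next
  case (Suc t)
  then have "iterate \<omega> t \<in> Rd d" "iterate \<omega> (Suc t) \<in> Rd d" "estimate \<omega> t \<in> Rd d" by auto
  moreover have "\<omega> (Suc t) < n" using index_less assms(1) Suc.prems by blast
  ultimately have "estimate \<omega> (Suc t) \<in> Rd d"
    using gf_in_Rd g_in_Rd by (auto simp: estimate_Suc Rd_def)
  then show ?case
    using \<open>iterate \<omega> (Suc t) \<in> Rd d\<close> by (simp add: iterate_Suc[of _ "Suc t"] Rd_def)
qed

lemma vnorm_iterate_Suc_diff:
  "vnorm d (\<lambda>j. iterate \<omega> (Suc t) j - iterate \<omega> t j) = step \<omega> t * vnorm d (estimate \<omega> t)"
  using vnorm_mult[of d "- step \<omega> t" "estimate \<omega> t"] \<beta>0_pos
  by (simp add: iterate_Suc ada_step_def sum_nonneg)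

definition path_len :: "(nat \<Rightarrow> nat) \<Rightarrow> nat \<Rightarrow> real" where
  "path_len \<omega> t = (\<Sum>s<t. step \<omega> s * vnorm d (estimate \<omega> s))"

definition err :: "(nat \<Rightarrow> nat) \<Rightarrow> nat \<Rightarrow> nat \<Rightarrow> real" where
  "err \<omega> t = (\<lambda>j. estimate \<omega> t j - gf (iterate \<omega> t) j)"

definition noise :: "(nat \<Rightarrow> nat) \<Rightarrow> nat \<Rightarrow> nat \<Rightarrow> real" where
  "noise \<omega> t = (\<lambda>j. (g (\<omega> (Suc t)) (iterate \<omega> (Suc t)) j - g (\<omega> (Suc t)) (iterate \<omega> t) j)
                    - (gf (iterate \<omega> (Suc t)) j - gf (iterate \<omega> t) j))"

lemma err_0: "err \<omega> 0 = (\<lambda>j. 0)"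
  by (simp add: err_def iterate_0 estimate_0)

lemma err_Suc:
  "err \<omega> (Suc t) = (if Suc t mod n = 0 then (\<lambda>j. 0) else (\<lambda>j. err \<omega> t j + noise \<omega> t j))"
  by (simp add: err_def noise_def estimate_Suc fun_eq_iff)

lemma vnorm_noise_le:
  assumes "\<omega> \<in> \<Omega>" "Suc t < T"
  shows "vnorm d (noise \<omega> t) \<le> 2 * L * (step \<omega> t * vnorm d (estimate \<omega> t))"
proof -
  let ?x = "iterate \<omega> t" and ?x' = "iterate \<omega> (Suc t)" and ?i = "\<omega> (Suc t)"
  have "?x \<in> Rd d" "?x' \<in> Rd d" using iterate_estimate_in_Rd[OF assms(1)] assms(2) by auto
  moreover have "?i < n" using index_less assms by blast
  ultimately have "vnorm d (\<lambda>j. g ?i ?x' j - g ?i ?x j) \<le> L * vnorm d (\<lambda>j. ?x' j - ?x j)"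
    and "vnorm d (\<lambda>j. gf ?x' j - gf ?x j) \<le> L * vnorm d (\<lambda>j. ?x' j - ?x j)"
    using g_lipschitz gf_lipschitz by (auto simp: lipschitz_grad_def)
  then show ?thesis
    using vnorm_diff_le[of d "\<lambda>j. g ?i ?x' j - g ?i ?x j" "\<lambda>j. gf ?x' j - gf ?x j"]
    by (simp add: noise_def vnorm_iterate_Suc_diff)
qed

lemma vnorm_iterate_diff_x0_le: "vnorm d (\<lambda>j. iterate \<omega> t j - x0 j) \<le> path_len \<omega> t"
proof (induction t)
  case (Suc t)
  then show ?case
    using vnorm_diff_triangle[of d "iterate \<omega> (Suc t)" x0 "iterate \<omega> t"]
    by (simp add: path_len_def vnorm_iterate_Suc_diff)
qed (simp add: iterate_0 path_len_def vnorm_zero)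

lemma vnorm_err_le:
  assumes "\<omega> \<in> \<Omega>"
  shows "t < T \<Longrightarrow> vnorm d (err \<omega> t) \<le> 2 * L * path_len \<omega> t"
proof (induction t)
  case (Suc t)
  have "0 \<le> path_len \<omega> (Suc t)"
    using \<beta>0_pos by (simp add: path_len_def sum_nonneg vnorm_nonneg ada_step_def)
  moreover have "vnorm d (\<lambda>j. err \<omega> t j + noise \<omega> t j) \<le> 2 * L * path_len \<omega> (Suc t)"
    using vnorm_add_le[of d "err \<omega> t" "noise \<omega> t"] Suc vnorm_noise_le[OF assms Suc.prems]
    by (simp add: path_len_def algebra_simps)
  ultimately show ?case using L_nonneg by (simp add: err_Suc vnorm_zero)
qed (simp add: err_0 path_len_def vnorm_zero)

lemma vnorm_estimate_le:
  assumes "\<omega> \<in> \<Omega>" "t < T"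
  shows "vnorm d (estimate \<omega> t) \<le> vnorm d (gf x0) + 3 * L * path_len \<omega> t"
proof -
  let ?x = "iterate \<omega> t"
  have "estimate \<omega> t = (\<lambda>j. err \<omega> t j + ((gf ?x j - gf x0 j) + gf x0 j))"
    by (simp add: err_def)
  then have "vnorm d (estimate \<omega> t) \<le> vnorm d (err \<omega> t) + vnorm d (\<lambda>j. (gf ?x j - gf x0 j) + gf x0 j)"
    using vnorm_add_le by simp
  also have "\<dots> \<le> vnorm d (err \<omega> t) + (vnorm d (\<lambda>j. gf ?x j - gf x0 j) + vnorm d (gf x0))"
    by (intro add_left_mono vnorm_add_le)
  also have "vnorm d (\<lambda>j. gf ?x j - gf x0 j) \<le> L * vnorm d (\<lambda>j. ?x j - x0 j)"
    using gf_lipschitz iterate_estimate_in_Rd[OF assms] x0_in_Rd by (simp add: lipschitz_grad_def)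
  also have "\<dots> \<le> L * path_len \<omega> t"
    using vnorm_iterate_diff_x0_le L_nonneg by (rule mult_left_mono)
  finally show ?thesis using vnorm_err_le[OF assms] by simp
qed

lemma sum_step_estimate_power2_le:
  assumes "\<omega> \<in> \<Omega>"
  shows "(\<Sum>s<T. (step \<omega> s * vnorm d (estimate \<omega> s))^2)
           \<le> 144 * ln (1 + T * (L / (\<beta>0 * G0) + vnorm d (gf x0) / G0)) / (sqrt n * \<beta>0^2)"
  using n_pos L_nonneg \<beta>0_pos G0_pos vnorm_nonneg
proof (rule adagrad_sum_power2_le_ln)
  fix t assume "t < T"
  then show "0 \<le> vnorm d (estimate \<omega> t) \<and> vnorm d (estimate \<omega> t)
      \<le> vnorm d (gf x0) + 3 * L * (\<Sum>s<t. step \<omega> s * vnorm d (estimate \<omega> s))"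
    using vnorm_estimate_le[OF assms] by (simp add: vnorm_nonneg path_len_def)
qed

end

section \<open>Mean-square error of the estimator\<close>

context adaspider_run
begin

definition sq_err :: "nat \<Rightarrow> real" where
  "sq_err t = (\<Sum>\<omega>\<in>\<Omega>. (vnorm d (err \<omega> t))^2)"

definition sq_step :: "nat \<Rightarrow> real" where
  "sq_step s = (\<Sum>\<omega>\<in>\<Omega>. (step \<omega> s * vnorm d (estimate \<omega> s))^2)"

lemma sum_increment_deviation_eq_0:
  "(\<Sum>i<n. (g i x' j - g i x j) - (gf x' j - gf x j)) = 0"
  using n_pos by (simp add: gf_eq sum_subtractf flip: diff_divide_distrib)

lemma sum_vinner_err_noise_eq_0:
  assumes "Suc t < T"
  shows "(\<Sum>\<omega>\<in>\<Omega>. vinner d (err \<omega> t) (noise \<omega> t)) = 0"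
proof -
  define H where "H \<omega> = (\<lambda>i. vinner d (err \<omega> t)
    (\<lambda>j. (g i (iterate \<omega> (Suc t)) j - g i (iterate \<omega> t) j)
         - (gf (iterate \<omega> (Suc t)) j - gf (iterate \<omega> t) j)))" for \<omega>
  have "H (\<omega>(Suc t := i)) = H \<omega>" for \<omega> i
  proof -
    have "state (\<omega>(Suc t := i)) t = state \<omega> t" by (rule adaspider_cong) simp
    then show ?thesis
      by (simp only: H_def err_def iterate_Suc_state) (simp add: ada_x_def ada_grad_def)
  qed
  then have "(\<Sum>\<omega>\<in>\<Omega>. H \<omega> (\<omega> (Suc t))) = (\<Sum>\<omega>\<in>\<Omega>. \<Sum>i<n. H \<omega> i) / card {..<n}"
    using assms by (intro sum_PiE_eval_eq_mean) auto
  moreover have "(\<Sum>i<n. H \<omega> i) = 0" for \<omega>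
    unfolding H_def vinner_sum_right[symmetric] sum_increment_deviation_eq_0
    by (simp add: vinner_def)
  ultimately show ?thesis by (simp add: H_def noise_def)
qed

lemma sq_err_Suc_le:
  assumes "Suc t < T" "Suc t mod n \<noteq> 0"
  shows "sq_err (Suc t) \<le> sq_err t + 4 * L^2 * sq_step t"
proof -
  have "(vnorm d (err \<omega> (Suc t)))^2 \<le> (vnorm d (err \<omega> t))^2 + 2 * vinner d (err \<omega> t) (noise \<omega> t)
      + 4 * L^2 * (step \<omega> t * vnorm d (estimate \<omega> t))^2" if "\<omega> \<in> \<Omega>" for \<omega>
  proof -
    have "(vnorm d (noise \<omega> t))^2 \<le> (2 * L * (step \<omega> t * vnorm d (estimate \<omega> t)))^2"
      using vnorm_noise_le[OF that assms(1)] by (intro power_mono) (auto simp: vnorm_nonneg)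
    then show ?thesis by (simp add: err_Suc assms(2) vnorm_add_power2 power_mult_distrib)
  qed
  then have "sq_err (Suc t) \<le> (\<Sum>\<omega>\<in>\<Omega>. (vnorm d (err \<omega> t))^2
      + 2 * vinner d (err \<omega> t) (noise \<omega> t) + 4 * L^2 * (step \<omega> t * vnorm d (estimate \<omega> t))^2)"
    unfolding sq_err_def by (rule sum_mono)
  also have "\<dots> = sq_err t + 4 * L^2 * sq_step t"
    using sum_vinner_err_noise_eq_0[OF assms(1)]
    by (simp add: sq_err_def sq_step_def sum.distrib flip: sum_distrib_left)
  finally show ?thesis .
qed

lemma sq_err_le: "t < T \<Longrightarrow> sq_err t \<le> 4 * L^2 * (\<Sum>s\<in>{t - t mod n..<t}. sq_step s)"
proof (induction t)
  case 0
  then show ?case by (simp add: sq_err_def err_0 vnorm_zero)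
next
  case (Suc t)
  show ?case
  proof (cases "Suc t mod n = 0")
    case True
    then show ?thesis by (simp add: sq_err_def err_Suc vnorm_zero sq_step_def sum_nonneg)
  next
    case False
    then have "Suc t mod n = Suc (t mod n)" by (simp add: mod_Suc split: if_splits)
    then have "{Suc t - Suc t mod n..<Suc t} = insert t {t - t mod n..<t}"
      by (auto simp: mod_less_eq_dividend)
    then show ?thesis
      using sq_err_Suc_le[OF Suc.prems False] Suc by (simp add: algebra_simps)
  qed
qed

lemma sum_sq_err_le: "(\<Sum>t<T. sq_err t) \<le> 4 * L^2 * n * (\<Sum>s<T. sq_step s)"
proof -
  have "(\<Sum>t<T. sq_err t) \<le> (\<Sum>t<T. 4 * L^2 * (\<Sum>s\<in>{t - t mod n..<t}. sq_step s))"
    by (intro sum_mono sq_err_le) simp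
  also have "\<dots> = 4 * L^2 * (\<Sum>t<T. \<Sum>s\<in>{t - t mod n..<t}. sq_step s)"
    by (simp add: sum_distrib_left)
  also have "\<dots> \<le> 4 * L^2 * (n * (\<Sum>s<T. sq_step s))"
    using n_pos by (intro mult_left_mono sum_sum_window_le)
      (auto simp: sq_step_def sum_nonneg intro: diff_le_mono2 mod_le_divisor)
  finally show ?thesis by (simp add: mult.assoc)
qed

lemma sum_sq_step_le:
  "(\<Sum>s<T. sq_step s)
     \<le> card \<Omega> * (144 * ln (1 + T * (L / (\<beta>0 * G0) + vnorm d (gf x0) / G0)) / (sqrt n * \<beta>0^2))"
proof -
  have "(\<Sum>s<T. sq_step s) = (\<Sum>\<omega>\<in>\<Omega>. \<Sum>s<T. (step \<omega> s * vnorm d (estimate \<omega> s))^2)"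
    unfolding sq_step_def by (rule sum.swap)
  also have "\<dots> \<le> (\<Sum>\<omega>\<in>\<Omega>. 144 * ln (1 + T * (L / (\<beta>0 * G0) + vnorm d (gf x0) / G0))
                                / (sqrt n * \<beta>0^2))"
    by (intro sum_mono sum_step_estimate_power2_le)
  finally show ?thesis by simp
qed

lemma power2_sum_sum_vnorm_err_le:
  "(\<Sum>\<omega>\<in>\<Omega>. \<Sum>t<T. vnorm d (err \<omega> t))^2 \<le> real (card \<Omega>) * real T * (\<Sum>t<T. sq_err t)"
proof -
  have "(\<Sum>\<omega>\<in>\<Omega>. \<Sum>t<T. vnorm d (err \<omega> t))^2
      = (\<Sum>p\<in>\<Omega> \<times> {..<T}. vnorm d (err (fst p) (snd p)))^2"
    by (simp add: sum.cartesian_product split_def)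
  also have "\<dots> \<le> real (card \<Omega>) * real T * (\<Sum>p\<in>\<Omega> \<times> {..<T}. (vnorm d (err (fst p) (snd p)))^2)"
    using power2_sum_le_card_mult[of "\<lambda>p. vnorm d (err (fst p) (snd p))" "\<Omega> \<times> {..<T}"]
    by (simp add: card_cartesian_product)
  also have "(\<Sum>p\<in>\<Omega> \<times> {..<T}. (vnorm d (err (fst p) (snd p)))^2) = (\<Sum>t<T. sq_err t)"
    using sum.swap[of "\<lambda>t \<omega>. (vnorm d (err \<omega> t))^2" \<Omega> "{..<T}"]
    by (simp add: sq_err_def sum.cartesian_product split_def)
  finally show ?thesis .
qed

theorem expect_sum_vnorm_err_le:
  "expect_idx n T (\<lambda>\<omega>. \<Sum>t<T. vnorm d (err \<omega> t))
     \<le> 24 * (L * root 4 n * sqrt T / \<beta>0)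
         * sqrt (ln (1 + real n * real T * (L / (\<beta>0 * G0) + vnorm d (gf x0) / G0)))"
proof -
  define N where "N = real (card \<Omega>)"
  define X where "X = L / (\<beta>0 * G0) + vnorm d (gf x0) / G0"
  define S where "S = (\<Sum>\<omega>\<in>\<Omega>. \<Sum>t<T. vnorm d (err \<omega> t))"
  define B where "B = 24 * (L * root 4 n * sqrt T / \<beta>0)"
  have "0 < N" using n_pos by (simp add: N_def card_PiE)
  have "0 \<le> X" using L_nonneg \<beta>0_pos G0_pos by (simp add: X_def vnorm_nonneg)
  have "S^2 \<le> N * T * (\<Sum>t<T. sq_err t)"
    unfolding S_def N_def by (rule power2_sum_sum_vnorm_err_le)
  also have "\<dots> \<le> N * T * (4 * L^2 * n * (N * (144 * ln (1 + T * X) / (sqrt n * \<beta>0^2))))"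
    using sum_sq_err_le sum_sq_step_le L_nonneg \<open>0 < N\<close>
    by (intro mult_left_mono order_trans[OF sum_sq_err_le]) (auto simp: N_def X_def)
  also have "\<dots> = N^2 * (576 * L^2 * sqrt n * T * ln (1 + T * X) / \<beta>0^2)"
  proof -
    have "real n / sqrt n = sqrt n" by (simp add: real_div_sqrt)
    then show ?thesis using n_pos \<beta>0_pos by (simp add: field_simps power2_eq_square)
  qed
  also have "\<dots> = (N * (B * sqrt (ln (1 + T * X))))^2"
  proof -
    have "(root 4 n)^2 = sqrt n" by (simp add: power2_root_4)
    then show ?thesis using \<open>0 \<le> X\<close>
      by (simp only: B_def power_mult_distrib power_divide real_sqrt_pow2) simp
  qed
  finally have "S \<le> N * (B * sqrt (ln (1 + T * X)))"
    by (rule power2_le_imp_le) (use L_nonneg \<beta>0_pos \<open>0 < N\<close> \<open>0 \<le> X\<close> in \<open>simp add: B_def\<close>)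
  then have "S / N \<le> B * sqrt (ln (1 + T * X))"
    using \<open>0 < N\<close> by (simp add: pos_divide_le_eq mult.commute)
  also have "\<dots> \<le> B * sqrt (ln (1 + real n * real T * X))"
    using n_pos L_nonneg \<beta>0_pos \<open>0 \<le> X\<close> mult_right_mono[of 1 n "T * X"]
    by (intro mult_left_mono real_sqrt_le_mono ln_mono) (auto simp: B_def mult.assoc add_pos_nonneg)
  finally show ?thesis by (simp only: expect_idx_def S_def N_def B_def X_def)
qed

end

theorem lemma3:
  shows "\<exists>C>0. \<forall>(d::nat) (n::nat) (T::nat) (L::real) (\<beta>0::real) (G0::real)
           (x0::nat \<Rightarrow> real) (f::nat \<Rightarrow> (nat \<Rightarrow> real) \<Rightarrow> real)
           (g::nat \<Rightarrow> (nat \<Rightarrow> real) \<Rightarrow> (nat \<Rightarrow> real)).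
     1 \<le> n \<and> 1 \<le> T \<and> 0 \<le> L \<and> 0 < \<beta>0 \<and> 0 < G0 \<and> x0 \<in> Rd d \<and>
     (\<forall>i<n. is_gradient d (f i) (g i) \<and> lipschitz_grad d L (g i))
     \<longrightarrow>
     (let gf = (\<lambda>x j. (1 / real n) * (\<Sum>i<n. g i x j)) in
       expect_idx n T (\<lambda>\<omega>. \<Sum>t<T.
           vnorm d (\<lambda>j. ada_grad n d gf g \<beta>0 G0 x0 \<omega> t j
                        - gf (ada_x n d gf g \<beta>0 G0 x0 \<omega> t) j))
       \<le> C * (L * root 4 (real n) * sqrt (real T) / \<beta>0)
           * sqrt (ln (1 + real n * real T * (L / (\<beta>0 * G0) + vnorm d (gf x0) / G0))))"
proof (intro exI[of _ 24] conjI allI impI)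
  fix d n T :: nat and L \<beta>0 G0 :: real and x0 :: "nat \<Rightarrow> real"
    and f :: "nat \<Rightarrow> (nat \<Rightarrow> real) \<Rightarrow> real"
    and g :: "nat \<Rightarrow> (nat \<Rightarrow> real) \<Rightarrow> (nat \<Rightarrow> real)"
  assume hyps: "1 \<le> n \<and> 1 \<le> T \<and> 0 \<le> L \<and> 0 < \<beta>0 \<and> 0 < G0 \<and> x0 \<in> Rd d \<and>
     (\<forall>i<n. is_gradient d (f i) (g i) \<and> lipschitz_grad d L (g i))"
  interpret adaspider_run n d T L \<beta>0 G0 x0 g "\<lambda>x j. (1 / real n) * (\<Sum>i<n. g i x j)"
    using hyps by unfold_locales (auto simp: is_gradient_def)
  show "let gf = (\<lambda>x j. (1 / real n) * (\<Sum>i<n. g i x j)) in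
       expect_idx n T (\<lambda>\<omega>. \<Sum>t<T.
           vnorm d (\<lambda>j. ada_grad n d gf g \<beta>0 G0 x0 \<omega> t j
                        - gf (ada_x n d gf g \<beta>0 G0 x0 \<omega> t) j))
       \<le> 24 * (L * root 4 (real n) * sqrt (real T) / \<beta>0)
           * sqrt (ln (1 + real n * real T * (L / (\<beta>0 * G0) + vnorm d (gf x0) / G0)))"
    using expect_sum_vnorm_err_le unfolding err_def Let_def .
qed simp

end
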